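(* Let $\alpha>0$ and let $(X^n)_{n=1}^\infty$, $(\Lambda^n)_{n=1}^\infty$ be given by $$X^{n+1} =\mathfrak{S}_{f_{\alpha}}\left(F-\frac{\Lambda^n}{2}\right),\qquad \Lambda^{n+1} = \Lambda^{n} + \alpha\mathcal{P}_{\mathcal{M}^\perp}(X^{n+1}),\qquad \Lambda^0=0.$$ Then $(X^{n})_{n=1}^\infty$ and $(\Lambda^{n})_{n=1}^\infty$ converge to some limits $X^\star$ and $\Lambda^\star$, where $X^\star$ is the solution to $$\operatorname{arg\,min}_{X\in\mathcal{M}}\mathscr{N}_{F}^{**}(X)+\frac{\alpha}{2}\|X\|_2^2.$$
   Context: $X,F$ are $M\times N$ matrices, $\|\cdot\|_2$ the Frobenius norm, $\mathcal{M}$ a linear subspace of matrices with orthogonal projection $\mathcal{P}_{\mathcal{M}^\perp}$ onto its orthogonal complement, $\sigma_0>0$ a parameter, and $\mathscr{N}_F^{**}(X)= \sum_j\left( \sigma_0^2-\left(\max\left(\sigma_0-\sigma_j(X),0\right)\right)^2\right) + \|X-F\|_2^2$ is the convex envelope of $\sigma_0^2\operatorname{rank}(X)+\|X-F\|_2^2$. For a matrix $G=U\Sigma_\phi V^*$ (SVD), $\mathfrak{S}_{f_\alpha}(G)=U\Sigma_{f_\alpha(\phi)}V^*$, where $f_\alpha(x)=0$ for $x<\sigma_0$, $f_\alpha(x)=\frac{2}{\alpha}(x-\sigma_0)$ for $\sigma_0\leq x<(1+\frac{\alpha}{2})\sigma_0$, and $f_\alpha(x)=(1+\frac{\alpha}{2})^{-1}x$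 for $x\geq(1+\frac{\alpha}{2})\sigma_0$. *)

theory Defs
  imports "HOL-Analysis.Analysis"
begin

text \<open>Real M x N matrices are modelled as real^'n^'m. The HOL-Analysis norm and
inner product on this type are the Frobenius norm and Frobenius inner product.\<close>

definition outer :: "real^'m \<Rightarrow> real^'n \<Rightarrow> real^'n^'m" where
  "outer x y = (\<chi> i j. x$i * y$j)"

definition svd_rep :: "real^'n^'m \<Rightarrow> nat \<Rightarrow> (nat \<Rightarrow> real) \<Rightarrow> (nat \<Rightarrow> real^'m)
                        \<Rightarrow> (nat \<Rightarrow> real^'n) \<Rightarrow> bool" where
  "svd_rep G r s u v \<longleftrightarrow>
     (\<forall>k<r. s k > 0) \<and>
     (\<forall>i<r. \<forall>j<r. u i \<bullet> u j = (if i = j then 1 else 0)) \<and>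
     (\<forall>i<r. \<forall>j<r. v i \<bullet> v j = (if i = j then 1 else 0)) \<and>
     G = (\<Sum>k<r. s k *\<^sub>R outer (u k) (v k))"

text \<open>Spectral map S_f(G) = U Sigma_{f(phi)} V^*, for f with f 0 = 0
  (so that zero singular values may be dropped).\<close>
definition spectral_map :: "(real \<Rightarrow> real) \<Rightarrow> real^'n^'m \<Rightarrow> real^'n^'m" where
  "spectral_map f G = (SOME X. \<exists>r s u v. svd_rep G r s u v \<and>
        X = (\<Sum>k<r. f (s k) *\<^sub>R outer (u k) (v k)))"

definition f_alpha :: "real \<Rightarrow> real \<Rightarrow> real \<Rightarrow> real" where
  "f_alpha \<sigma>0 \<alpha> x =
     (if x < \<sigma>0 then 0
      else if x < (1 + \<alpha>/2) * \<sigma>0 then (2/\<alpha>) * (x - \<sigma>0)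
      else x / (1 + \<alpha>/2))"

text \<open>N_F^**(X) = sum_j (sigma0^2 - (max(sigma0 - sigma_j(X),0))^2) + ||X - F||^2.
  Zero singular values contribute 0, so summing over the nonzero ones suffices.\<close>
definition N_env :: "real \<Rightarrow> real^'n^'m \<Rightarrow> real^'n^'m \<Rightarrow> real" where
  "N_env \<sigma>0 F X = (SOME t. \<exists>r s u v. svd_rep X r s u v \<and>
        t = (\<Sum>k<r. \<sigma>0\<^sup>2 - (max (\<sigma>0 - s k) 0)\<^sup>2)) + (norm (X - F))\<^sup>2"

definition proj_perp :: "(real^'n^'m) set \<Rightarrow> real^'n^'m \<Rightarrow> real^'n^'m" where
  "proj_perp Msub X = X - (THE Y. Y \<in> Msub \<and> (\<forall>Z\<in>Msub. (X - Y) \<bullet> Z = 0))"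

end

theory Submission
  imports Defs
begin

text \<open>With \<open>G = F - \<Lambda>/2\<close>, the Lagrangian \<open>N\<^sub>F\<^sup>*\<^sup>*(Y) + \<alpha>/2 \<parallel>Y\<parallel>\<^sup>2 + \<langle>\<Lambda>, Y\<rangle>\<close> equals,
  up to a constant, \<open>2\<sigma>\<^sub>0 \<parallel>Y\<parallel>\<^sub>* + dist(Y, \<sigma>\<^sub>0 B\<^sub>o\<^sub>p)\<^sup>2 + \<alpha>/2 \<parallel>Y\<parallel>\<^sup>2 - 2\<langle>Y, G\<rangle>\<close>, and
  \<open>S\<^sub>f\<^sub>\<alpha>(G)\<close> satisfies its first-order optimality condition coordinatewise in a singular basis
  of \<open>G\<close>. So \<open>X\<^sup>n\<^sup>+\<^sup>1\<close> minimises an \<open>\<alpha>\<close>-strongly convex Lagrangian and the iteration is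
  Uzawa's method (dual ascent with step \<open>\<alpha>\<close>) for minimising \<open>N\<^sub>F\<^sup>*\<^sup>* + \<alpha>/2 \<parallel>\<cdot>\<parallel>\<^sup>2\<close> over \<open>\<M>\<close>.
  Strong convexity makes the primal map \<open>1/\<alpha>\<close>-Lipschitz and the dual function concave, continuous
  and coercive; a dual maximiser is a saddle point, the multipliers are Fej\'er monotone with respect
  to every saddle point, and this forces convergence of both sequences.\<close>

section \<open>Orthonormal families and outer products\<close>

definition orthonormal_upto :: "nat \<Rightarrow> (nat \<Rightarrow> 'a::real_inner) \<Rightarrow> bool" where
  "orthonormal_upto r e \<longleftrightarrow> (\<forall>i<r. \<forall>j<r. e i \<bullet> e j = (if i = j then 1 else 0))"

lemma orthonormal_upto_norm: "orthonormal_upto r e \<Longrightarrow> k < r \<Longrightarrow> norm (e k) = 1"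
  by (simp add: orthonormal_upto_def norm_eq_1)

lemma inner_sum_orthonormal_upto_left:
  assumes "orthonormal_upto r e" and "k < r"
  shows "(\<Sum>j<r. c j *\<^sub>R e j) \<bullet> e k = c k"
proof -
  have "(\<Sum>j<r. c j *\<^sub>R e j) \<bullet> e k = (\<Sum>j<r. if j = k then c j else 0)"
    unfolding inner_sum_left
    by (rule sum.cong) (use assms in \<open>auto simp: orthonormal_upto_def\<close>)
  then show ?thesis using assms(2) by simp
qed

lemma inner_sum_orthonormal_upto:
  assumes "orthonormal_upto r e"
  shows "(\<Sum>k<r. c k *\<^sub>R e k) \<bullet> (\<Sum>k<r. d k *\<^sub>R e k) = (\<Sum>k<r. c k * d k)"
  unfolding inner_sum_right inner_scaleR_right
  by (rule sum.cong) (simp_all add: inner_sum_orthonormal_upto_left[OF assms] mult.commute)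

lemma norm_sum_orthonormal_upto_sq:
  "orthonormal_upto r e \<Longrightarrow> (norm (\<Sum>k<r. c k *\<^sub>R e k))\<^sup>2 = (\<Sum>k<r. (c k)\<^sup>2)"
  unfolding power2_norm_eq_inner by (simp add: inner_sum_orthonormal_upto power2_eq_square)

lemma bessel_inequality:
  assumes "orthonormal_upto r e"
  shows "(\<Sum>k<r. (z \<bullet> e k)\<^sup>2) \<le> (norm z)\<^sup>2"
proof -
  define w where "w = (\<Sum>k<r. (z \<bullet> e k) *\<^sub>R e k)"
  have zw: "z \<bullet> w = (\<Sum>k<r. (z \<bullet> e k)\<^sup>2)"
    by (simp add: w_def inner_sum_right power2_eq_square)
  have ww: "w \<bullet> w = (\<Sum>k<r. (z \<bullet> e k)\<^sup>2)"
    by (simp add: w_def inner_sum_orthonormal_upto[OF assms] power2_eq_square)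
  have "0 \<le> (z - w) \<bullet> (z - w)" by simp
  also have "\<dots> = z \<bullet> z - 2 * (z \<bullet> w) + w \<bullet> w"
    by (simp add: inner_diff_left inner_diff_right inner_commute)
  finally show ?thesis using zw ww by (simp add: power2_norm_eq_inner)
qed

lemma orthonormal_upto_le_DIM:
  fixes e :: "nat \<Rightarrow> 'a::euclidean_space"
  assumes e: "orthonormal_upto r e"
  shows "r \<le> DIM('a)"
proof -
  have inj: "inj_on e {..<r}"
    by (rule inj_onI) (use e in \<open>auto simp: orthonormal_upto_def, metis zero_neq_one\<close>)
  have "0 \<notin> e ` {..<r}"
    using orthonormal_upto_norm[OF e] by fastforce
  then have "independent (e ` {..<r})"
    by (intro pairwise_orthogonal_independent)
      (use e in \<open>auto simp: pairwise_def orthogonal_def orthonormal_upto_def\<close>)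
  then have "card (e ` {..<r}) \<le> DIM('a)" using independent_bound by blast
  then show ?thesis using card_image[OF inj] by simp
qed

lemma inner_outer: "outer a b \<bullet> outer c d = (a \<bullet> c) * (b \<bullet> d)"
  unfolding inner_vec_def outer_def
  by (simp add: sum_product mult_ac) (rule sum.swap)

lemma outer_mult_vec: "outer a b *v x = (b \<bullet> x) *\<^sub>R a"
  by (simp add: vec_eq_iff matrix_vector_mult_def outer_def inner_vec_def sum_distrib_left sum_distrib_right mult_ac)

lemma vec_mult_outer: "x v* outer a b = (x \<bullet> a) *\<^sub>R b"
  by (simp add: vec_eq_iff vector_matrix_mult_def outer_def inner_vec_def sum_distrib_left sum_distrib_right mult_ac)

lemma sum_matrix_vector_mult: "(\<Sum>k\<in>A. f k) *v x = (\<Sum>k\<in>A. f k *v (x::real^'n))"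
  by (induction A rule: infinite_finite_induct) (auto simp: matrix_vector_mult_add_rdistrib)

lemma vector_matrix_mult_sum: "(x::real^'m) v* (\<Sum>k\<in>A. f k) = (\<Sum>k\<in>A. x v* f k)"
  by (induction A rule: infinite_finite_induct) (auto simp: vector_matrix_mult_add_rdistrib)

lemma scaleR_matrix_vector_mult: "(c *\<^sub>R A) *v x = c *\<^sub>R (A *v (x::real^'n))"
  by (simp add: vec_eq_iff matrix_vector_mult_def sum_distrib_left mult_ac)

lemma vector_matrix_mult_scaleR: "(x::real^'m) v* (c *\<^sub>R A) = c *\<^sub>R (x v* A)"
  by (simp add: vec_eq_iff vector_matrix_mult_def sum_distrib_left mult_ac)

lemma orthonormal_upto_outer:
  "orthonormal_upto r u \<Longrightarrow> orthonormal_upto r v \<Longrightarrow> orthonormal_upto r (\<lambda>k. outer (u k) (v k))"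
  by (simp add: orthonormal_upto_def inner_outer)

section \<open>Singular value decomposition\<close>

lemma eq_scaleR_of_inner_maximal:
  fixes y a :: "'a::real_inner"
  assumes a: "norm a = 1" and ay: "a \<bullet> y = \<sigma>" and \<sigma>: "\<sigma> > 0"
    and max: "\<And>c. norm c = 1 \<Longrightarrow> c \<bullet> y \<le> \<sigma>"
  shows "y = \<sigma> *\<^sub>R a"
proof -
  have y0: "y \<noteq> 0" using ay \<sigma> by auto
  have "((1 / norm y) *\<^sub>R y) \<bullet> y \<le> \<sigma>" by (rule max) (use y0 in simp)
  then have "norm y \<le> \<sigma>"
    using y0 by (simp add: power2_norm_eq_inner[symmetric] power2_eq_square)
  moreover have "\<sigma> \<le> norm y" using Cauchy_Schwarz_ineq2[of a y] ay a by simp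
  ultimately have ny: "norm y = \<sigma>" by simp
  have "(a - (1/\<sigma>) *\<^sub>R y) \<bullet> (a - (1/\<sigma>) *\<^sub>R y) = a \<bullet> a - 2 / \<sigma> * (a \<bullet> y) + (y \<bullet> y) / \<sigma>\<^sup>2"
    by (simp add: inner_diff_left inner_diff_right inner_commute power2_eq_square)
  also have "\<dots> = 0" using a ay ny \<sigma> by (simp add: norm_eq_1 power2_norm_eq_inner[symmetric])
  finally have "a = (1/\<sigma>) *\<^sub>R y" by simp
  then show ?thesis using \<sigma> by simp
qed

text \<open>The largest singular value is the maximum of the bilinear form \<open>a \<bullet> (G *v b)\<close>
  over pairs of unit vectors; a maximising pair is a singular pair.\<close>

lemma top_singular_pair_exists:
  fixes G :: "real^'n^'m"
  assumes "G \<noteq> 0"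
  obtains a b \<sigma> where "norm a = 1" "norm b = 1" "\<sigma> > 0"
    "G *v b = \<sigma> *\<^sub>R a" "a v* G = \<sigma> *\<^sub>R b"
proof -
  obtain i j where ij: "G $ i $ j \<noteq> 0" using assms by (metis vec_eq_iff zero_index)
  define S where "S = sphere (0::real^'m) 1 \<times> sphere (0::real^'n) 1"
  define h where "h p = fst p \<bullet> (G *v snd p)" for p
  have "compact S" by (simp add: S_def compact_Times)
  moreover have "S \<noteq> {}" using vector_choose_size[of 1] by (auto simp: S_def)
  moreover have "continuous_on S h"
    unfolding h_def
    by (intro continuous_intros linear_continuous_on continuous_on_compose2[of UNIV "\<lambda>x. G *v x"])
      (auto simp: matrix_vector_mul_linear linear_conv_bounded_linear)
  ultimately obtain p where pS: "p \<in> S" and pmax: "\<And>q. q \<in> S \<Longrightarrow> h q \<le> h p"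
    using continuous_attains_sup[of S h] by blast
  define a b \<sigma> where "a = fst p" and "b = snd p" and "\<sigma> = h p"
  have na: "norm a = 1" and nb: "norm b = 1" using pS by (auto simp: S_def a_def b_def)
  have max: "c \<bullet> (G *v d) \<le> \<sigma>" if "norm c = 1" "norm d = 1" for c d
    using pmax[of "(c, d)"] that by (simp add: S_def h_def \<sigma>_def)
  have \<sigma>: "\<sigma> > 0"
  proof -
    define c where "c = (if G $ i $ j > 0 then 1 else -1::real)"
    have "0 < c * G $ i $ j" using ij by (auto simp: c_def)
    also have "\<dots> = (c *\<^sub>R axis i 1) \<bullet> (G *v axis j 1)"
      by (simp add: matrix_vector_mult_basis column_def inner_axis')
    also have "\<dots> \<le> \<sigma>" by (rule max) (simp_all add: c_def)
    finally show ?thesis .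
  qed
  have ab: "a \<bullet> (G *v b) = \<sigma>" by (simp add: a_def b_def \<sigma>_def h_def)
  have "G *v b = \<sigma> *\<^sub>R a"
    by (rule eq_scaleR_of_inner_maximal[OF na ab \<sigma>]) (use max nb in auto)
  moreover have "a v* G = \<sigma> *\<^sub>R b"
    by (rule eq_scaleR_of_inner_maximal[OF nb _ \<sigma>])
      (use ab max na in \<open>auto simp: dot_lmul_matrix[symmetric] inner_commute\<close>)
  ultimately show ?thesis using that na nb \<sigma> by blast
qed

lemma dim_range_deflation_less:
  fixes G :: "real^'n^'m"
  assumes na: "norm a = 1" and nb: "norm b = 1" and \<sigma>: "\<sigma> > 0"
    and Gb: "G *v b = \<sigma> *\<^sub>R a" and aG: "a v* G = \<sigma> *\<^sub>R b"
  shows "dim (range (\<lambda>x. (G - \<sigma> *\<^sub>R outer a b) *v x)) < dim (range (\<lambda>x. G *v x))"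
proof (rule dim_psubset)
  let ?G' = "G - \<sigma> *\<^sub>R outer a b"
  have G'x: "?G' *v x = G *v (x - (b \<bullet> x) *\<^sub>R b)" for x
    by (simp add: matrix_vector_mult_diff_rdistrib matrix_vector_mult_diff_distrib
        scaleR_matrix_vector_mult outer_mult_vec matrix_vector_mult_scaleR Gb)
  have aG': "a v* ?G' = 0"
    using na by (simp add: vector_matrix_mult_diff_rdistrib vector_matrix_mult_scaleR vec_mult_outer
        aG norm_eq_1)
  have "a = G *v ((1/\<sigma>) *\<^sub>R b)" using \<sigma> by (simp add: matrix_vector_mult_scaleR Gb)
  then have "a \<in> range (\<lambda>x. G *v x)" by blast
  moreover have "a \<notin> range (\<lambda>x. ?G' *v x)"
  proof
    assume "a \<in> range (\<lambda>x. ?G' *v x)"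
    then obtain x where "a = ?G' *v x" by auto
    then have "a \<bullet> a = (a v* ?G') \<bullet> x" by (simp add: dot_lmul_matrix)
    then show False using aG' na by (simp add: norm_eq_1)
  qed
  moreover have "range (\<lambda>x. ?G' *v x) \<subseteq> range (\<lambda>x. G *v x)" using G'x by auto
  moreover have "subspace (range (\<lambda>x. A *v x))" for A :: "real^'n^'m"
    by (rule linear_subspace_image) (auto simp: matrix_vector_mul_linear)
  ultimately show "span (range (\<lambda>x. ?G' *v x)) \<subset> span (range (\<lambda>x. G *v x))"
    by (metis span_eq_iff psubsetI)
qed

lemma svd_rep_singular_vectors:
  assumes rep: "svd_rep G r s u v" and k: "k < r"
  shows "G *v v k = s k *\<^sub>R u k" and "u k v* G = s k *\<^sub>R v k"
proof -
  have ou: "orthonormal_upto r u" and ov: "orthonormal_upto r v"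
    and G: "G = (\<Sum>k<r. s k *\<^sub>R outer (u k) (v k))"
    using rep by (auto simp: svd_rep_def orthonormal_upto_def)
  have "G *v v k = (\<Sum>j<r. s j *\<^sub>R (v j \<bullet> v k) *\<^sub>R u j)"
    by (simp add: G sum_matrix_vector_mult scaleR_matrix_vector_mult outer_mult_vec)
  also have "\<dots> = (\<Sum>j<r. if j = k then s k *\<^sub>R u k else 0)"
    by (rule sum.cong) (use ov k in \<open>auto simp: orthonormal_upto_def\<close>)
  finally show "G *v v k = s k *\<^sub>R u k" using k by simp
  have "u k v* G = (\<Sum>j<r. s j *\<^sub>R (u k \<bullet> u j) *\<^sub>R v j)"
    by (simp add: G vector_matrix_mult_sum vector_matrix_mult_scaleR vec_mult_outer)
  also have "\<dots> = (\<Sum>j<r. if j = k then s k *\<^sub>R v k else 0)"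
    by (rule sum.cong) (use ou k in \<open>auto simp: orthonormal_upto_def\<close>)
  finally show "u k v* G = s k *\<^sub>R v k" using k by simp
qed

lemma svd_rep_extend:
  fixes G :: "real^'n^'m"
  assumes rep: "svd_rep G r s u v" and na: "norm a = 1" and nb: "norm b = 1" and \<sigma>: "\<sigma> > 0"
    and Gb: "G *v b = 0" and aG: "a v* G = 0"
  shows "svd_rep (G + \<sigma> *\<^sub>R outer a b) (Suc r) (s(r := \<sigma>)) (u(r := a)) (v(r := b))"
proof -
  have s: "\<forall>k<r. s k > 0" and ou: "orthonormal_upto r u" and ov: "orthonormal_upto r v"
    and G: "G = (\<Sum>k<r. s k *\<^sub>R outer (u k) (v k))"
    using rep by (auto simp: svd_rep_def orthonormal_upto_def)
  have au: "a \<bullet> u k = 0" if k: "k < r" for k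
  proof -
    have "s k * (a \<bullet> u k) = (a v* G) \<bullet> v k"
      by (simp add: dot_lmul_matrix svd_rep_singular_vectors(1)[OF rep k])
    then show ?thesis using aG s[rule_format, OF k] by simp
  qed
  have bv: "b \<bullet> v k = 0" if k: "k < r" for k
  proof -
    have "s k * (v k \<bullet> b) = u k \<bullet> (G *v b)"
      by (simp add: dot_lmul_matrix[symmetric] svd_rep_singular_vectors(2)[OF rep k])
    then show ?thesis using Gb s[rule_format, OF k] by (simp add: inner_commute)
  qed
  have "(\<Sum>k<Suc r. (s(r := \<sigma>)) k *\<^sub>R outer ((u(r := a)) k) ((v(r := b)) k))
        = G + \<sigma> *\<^sub>R outer a b"
    by (simp add: G)
  then show ?thesis
    using s \<sigma> ou ov au bv na nb
    by (auto simp: svd_rep_def orthonormal_upto_def norm_eq_1 inner_commute less_Suc_eq)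
qed

text \<open>Induction on the rank: split off a top singular pair and decompose the deflated matrix.\<close>

lemma svd_rep_exists: "\<exists>r s u v. svd_rep (G::real^'n^'m) r s u v"
proof (induction "dim (range (\<lambda>x. G *v x))" arbitrary: G rule: less_induct)
  case less
  show ?case
  proof (cases "G = 0")
    case True
    then have "svd_rep G 0 s u v" for s u v by (simp add: svd_rep_def)
    then show ?thesis by blast
  next
    case False
    then obtain a b \<sigma> where ab: "norm a = 1" "norm b = 1" "\<sigma> > 0"
      and Gb: "G *v b = \<sigma> *\<^sub>R a" and aG: "a v* G = \<sigma> *\<^sub>R b"
      by (rule top_singular_pair_exists)
    define G' where "G' = G - \<sigma> *\<^sub>R outer a b"
    obtain r s u v where "svd_rep G' r s u v"
      using less dim_range_deflation_less[OF ab Gb aG] unfolding G'_def by blast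
    moreover have "G' *v b = 0"
      using ab by (simp add: G'_def matrix_vector_mult_diff_rdistrib scaleR_matrix_vector_mult
          outer_mult_vec Gb norm_eq_1)
    moreover have "a v* G' = 0"
      using ab by (simp add: G'_def vector_matrix_mult_diff_rdistrib vector_matrix_mult_scaleR
          vec_mult_outer aG norm_eq_1)
    ultimately have "svd_rep (G' + \<sigma> *\<^sub>R outer a b) (Suc r) (s(r := \<sigma>)) (u(r := a)) (v(r := b))"
      using ab by (intro svd_rep_extend)
    then show ?thesis by (auto simp: G'_def)
  qed
qed

section \<open>Nuclear norm and distance to the operator-norm ball\<close>

definition outer_rep :: "real^'n^'m \<Rightarrow> nat \<Rightarrow> (nat \<Rightarrow> real) \<Rightarrow> (nat \<Rightarrow> real^'m)
                          \<Rightarrow> (nat \<Rightarrow> real^'n) \<Rightarrow> bool" where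
  "outer_rep G r s u v \<longleftrightarrow> (\<forall>k<r. 0 \<le> s k) \<and> orthonormal_upto r u \<and> orthonormal_upto r v \<and>
     G = (\<Sum>k<r. s k *\<^sub>R outer (u k) (v k))"

text \<open>The operator-norm bound \<open>\<parallel>Z\<parallel>\<^sub>o\<^sub>p \<le> c\<close>, in its dual form.\<close>

definition opnorm_le :: "real^'n^'m \<Rightarrow> real \<Rightarrow> bool" where
  "opnorm_le Z c \<longleftrightarrow> (\<forall>a b. norm a = 1 \<longrightarrow> norm b = 1 \<longrightarrow> Z \<bullet> outer a b \<le> c)"

text \<open>Defined by duality, so that they do not depend on the choice of singular value
  decomposition; \<open>nuclear_norm_outer_rep\<close> and \<open>opball_dist_sq_outer_rep\<close> evaluate them.\<close>

definition nuclear_norm :: "real^'n^'m \<Rightarrow> real" where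
  "nuclear_norm X = Sup {X \<bullet> Z | Z. opnorm_le Z 1}"

definition opball_dist_sq :: "real \<Rightarrow> real^'n^'m \<Rightarrow> real" where
  "opball_dist_sq c X = Inf {(norm (X - Z))\<^sup>2 | Z. opnorm_le Z c}"

lemma outer_rep_if_svd_rep: "svd_rep G r s u v \<Longrightarrow> outer_rep G r s u v"
  by (auto simp: svd_rep_def outer_rep_def orthonormal_upto_def less_imp_le)

lemma outer_rep_orthonormal:
  "outer_rep G r s u v \<Longrightarrow> orthonormal_upto r (\<lambda>k. outer (u k) (v k))"
  by (simp add: outer_rep_def orthonormal_upto_outer)

lemma norm_outer_rep_sq:
  assumes "outer_rep G r s u v" shows "(norm G)\<^sup>2 = (\<Sum>k<r. (s k)\<^sup>2)"
proof -
  have "G = (\<Sum>k<r. s k *\<^sub>R outer (u k) (v k))" using assms by (simp add: outer_rep_def)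
  then show ?thesis using norm_sum_orthonormal_upto_sq[OF outer_rep_orthonormal[OF assms]] by simp
qed

lemma inner_outer_rep_le:
  assumes G: "outer_rep G r s u v" and Z: "opnorm_le Z c"
  shows "G \<bullet> Z \<le> c * (\<Sum>k<r. s k)"
proof -
  have "G \<bullet> Z = (\<Sum>k<r. s k * (outer (u k) (v k) \<bullet> Z))"
    using G by (simp add: outer_rep_def inner_sum_left)
  also have "\<dots> = (\<Sum>k<r. s k * (Z \<bullet> outer (u k) (v k)))"
    by (simp add: inner_commute)
  also have "\<dots> \<le> (\<Sum>k<r. s k * c)"
  proof (rule sum_mono)
    fix k assume "k \<in> {..<r}"
    then have "norm (u k) = 1" "norm (v k) = 1" "0 \<le> s k"
      using G by (auto simp: outer_rep_def orthonormal_upto_norm)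
    then show "s k * (Z \<bullet> outer (u k) (v k)) \<le> s k * c"
      using Z by (intro mult_left_mono) (auto simp: opnorm_le_def)
  qed
  finally show ?thesis by (simp add: sum_distrib_left mult_ac)
qed

lemma mult_le_half_sum_squares:
  fixes c p q C :: real
  assumes "\<bar>c\<bar> \<le> C"
  shows "c * (p * q) \<le> C * (p\<^sup>2 + q\<^sup>2) / 2"
proof -
  have "c * (p * q) \<le> \<bar>c\<bar> * \<bar>p * q\<bar>" by (simp add: abs_mult[symmetric])
  also have "\<dots> \<le> C * \<bar>p * q\<bar>" using assms by (rule mult_right_mono) simp
  also have "\<dots> \<le> C * ((p\<^sup>2 + q\<^sup>2) / 2)"
  proof (rule mult_left_mono)
    show "\<bar>p * q\<bar> \<le> (p\<^sup>2 + q\<^sup>2) / 2"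
      using zero_le_power2[of "\<bar>p\<bar> - \<bar>q\<bar>"] by (simp add: power2_diff abs_mult)
  qed (use assms in simp)
  finally show ?thesis by simp
qed

lemma opnorm_le_sum_outer:
  fixes u :: "nat \<Rightarrow> real^'m" and v :: "nat \<Rightarrow> real^'n"
  assumes ou: "orthonormal_upto r u" and ov: "orthonormal_upto r v"
    and c: "\<And>k. k < r \<Longrightarrow> \<bar>c k\<bar> \<le> C" and C: "0 \<le> C"
  shows "opnorm_le (\<Sum>k<r. c k *\<^sub>R outer (u k) (v k)) C"
  unfolding opnorm_le_def
proof (intro allI impI)
  fix a :: "real^'m" and b :: "real^'n" assume na: "norm a = 1" and nb: "norm b = 1"
  have "(\<Sum>k<r. c k *\<^sub>R outer (u k) (v k)) \<bullet> outer a b = (\<Sum>k<r. c k * ((u k \<bullet> a) * (v k \<bullet> b)))"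
    by (simp add: inner_sum_left inner_outer)
  also have "\<dots> = (\<Sum>k<r. c k * ((a \<bullet> u k) * (b \<bullet> v k)))"
    by (simp add: inner_commute)
  also have "\<dots> \<le> (\<Sum>k<r. C * ((a \<bullet> u k)\<^sup>2 + (b \<bullet> v k)\<^sup>2) / 2)"
    by (rule sum_mono, rule mult_le_half_sum_squares) (simp add: c)
  also have "\<dots> = C / 2 * ((\<Sum>k<r. (a \<bullet> u k)\<^sup>2) + (\<Sum>k<r. (b \<bullet> v k)\<^sup>2))"
    by (simp add: sum_distrib_left sum.distrib[symmetric] field_simps)
  also have "\<dots> \<le> C / 2 * ((norm a)\<^sup>2 + (norm b)\<^sup>2)"
    using bessel_inequality[OF ou, of a] bessel_inequality[OF ov, of b] C
    by (intro mult_left_mono add_mono) auto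
  finally show "(\<Sum>k<r. c k *\<^sub>R outer (u k) (v k)) \<bullet> outer a b \<le> C" using na nb by simp
qed

lemma nuclear_norm_outer_rep:
  assumes G: "outer_rep G r s u v"
  shows "nuclear_norm G = (\<Sum>k<r. s k)"
  unfolding nuclear_norm_def
proof (rule cSup_eq_maximum)
  have "opnorm_le (\<Sum>k<r. 1 *\<^sub>R outer (u k) (v k)) 1"
    using G by (intro opnorm_le_sum_outer) (auto simp: outer_rep_def)
  moreover have "G \<bullet> (\<Sum>k<r. 1 *\<^sub>R outer (u k) (v k)) = (\<Sum>k<r. s k)"
    using G inner_sum_orthonormal_upto[OF outer_rep_orthonormal[OF G], of s "\<lambda>_. 1"]
    by (simp add: outer_rep_def)
  ultimately show "(\<Sum>k<r. s k) \<in> {G \<bullet> Z | Z. opnorm_le Z 1}"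
    by (intro CollectI exI conjI) (rule sym)
  show "x \<le> (\<Sum>k<r. s k)" if "x \<in> {G \<bullet> Z | Z. opnorm_le Z 1}" for x
    using that inner_outer_rep_le[OF G] by fastforce
qed

lemma inner_le_nuclear_norm:
  fixes X W :: "real^'n^'m"
  assumes "opnorm_le W c"
  shows "X \<bullet> W \<le> c * nuclear_norm X"
proof -
  obtain r s u v where "svd_rep X r s u v" using svd_rep_exists by blast
  then have X: "outer_rep X r s u v" by (rule outer_rep_if_svd_rep)
  show ?thesis
    using inner_outer_rep_le[OF X assms] nuclear_norm_outer_rep[OF X] by simp
qed

lemma norm_diff_sq_ge_of_obtuse:
  fixes X Y Z Z\<^sub>0 :: "'a::real_inner"
  assumes "(X - Z\<^sub>0) \<bullet> (Z - Z\<^sub>0) \<le> 0"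
  shows "(norm (X - Z\<^sub>0))\<^sup>2 + 2 * ((X - Z\<^sub>0) \<bullet> (Y - X)) \<le> (norm (Y - Z))\<^sup>2"
proof -
  define e d where "e = X - Z\<^sub>0" and "d = (Y - X) - (Z - Z\<^sub>0)"
  have "Y - Z = e + d" by (simp add: e_def d_def)
  then have "(norm (Y - Z))\<^sup>2 = (norm e)\<^sup>2 + 2 * (e \<bullet> d) + (norm d)\<^sup>2"
    by (simp add: power2_norm_eq_inner inner_add_left inner_add_right inner_commute)
  moreover have "e \<bullet> d = e \<bullet> (Y - X) - e \<bullet> (Z - Z\<^sub>0)" by (simp add: d_def inner_diff_right)
  ultimately show ?thesis
    using assms zero_le_power2[of "norm d"] unfolding e_def by linarith
qed

text \<open>For \<open>X = \<Sum>\<^sub>k s\<^sub>k u\<^sub>k v\<^sub>k\<^sup>T\<close>, clipping the weights at \<open>c\<close> gives the nearest point of the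
  operator-norm ball, so \<open>2 \<Sum>\<^sub>k (s\<^sub>k - c)\<^sub>+ u\<^sub>k v\<^sub>k\<^sup>T\<close> is a subgradient of \<open>opball_dist_sq\<close>.\<close>

lemma opball_dist_sq_subgradient:
  assumes X: "outer_rep X r s u v" and c: "0 \<le> c"
  defines "e \<equiv> (\<Sum>k<r. max (s k - c) 0 *\<^sub>R outer (u k) (v k))"
  shows "(\<Sum>k<r. (max (s k - c) 0)\<^sup>2) + 2 * (e \<bullet> (Y - X)) \<le> opball_dist_sq c Y"
  unfolding opball_dist_sq_def
proof (rule cInf_greatest)
  define Z\<^sub>0 where "Z\<^sub>0 = (\<Sum>k<r. min (s k) c *\<^sub>R outer (u k) (v k))"
  have E: "orthonormal_upto r (\<lambda>k. outer (u k) (v k))" by (rule outer_rep_orthonormal[OF X])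
  have "X - Z\<^sub>0 = (\<Sum>k<r. (s k - min (s k) c) *\<^sub>R outer (u k) (v k))"
    using X by (simp add: outer_rep_def Z\<^sub>0_def sum_subtractf scaleR_diff_left)
  also have "\<dots> = e" unfolding e_def by (rule sum.cong) (auto simp: min_def max_def)
  finally have XZ: "X - Z\<^sub>0 = e" .
  have "e \<bullet> Z\<^sub>0 = (\<Sum>k<r. max (s k - c) 0 * min (s k) c)"
    unfolding e_def Z\<^sub>0_def by (rule inner_sum_orthonormal_upto[OF E])
  also have "\<dots> = c * (\<Sum>k<r. max (s k - c) 0)"
    by (simp add: sum_distrib_left) (rule sum.cong, auto simp: min_def max_def)
  finally have eZ\<^sub>0: "e \<bullet> Z\<^sub>0 = c * (\<Sum>k<r. max (s k - c) 0)" .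
  have e: "outer_rep e r (\<lambda>k. max (s k - c) 0) u v"
    using X by (simp add: outer_rep_def e_def)
  have "(norm e)\<^sup>2 = (\<Sum>k<r. (max (s k - c) 0)\<^sup>2)" by (rule norm_outer_rep_sq[OF e])
  moreover have "(norm e)\<^sup>2 + 2 * (e \<bullet> (Y - X)) \<le> (norm (Y - Z))\<^sup>2" if "opnorm_le Z c" for Z
    using norm_diff_sq_ge_of_obtuse[of X Z\<^sub>0 Z Y] inner_outer_rep_le[OF e that] eZ\<^sub>0
    by (simp add: XZ inner_diff_right)
  ultimately show "(\<Sum>k<r. (max (s k - c) 0)\<^sup>2) + 2 * (e \<bullet> (Y - X)) \<le> x"
    if "x \<in> {(norm (Y - Z))\<^sup>2 | Z. opnorm_le Z c}" for x
    using that by auto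
  have "opnorm_le 0 c" using c by (simp add: opnorm_le_def)
  then show "{(norm (Y - Z))\<^sup>2 | Z. opnorm_le Z c} \<noteq> {}" by blast
qed

lemma opball_dist_sq_outer_rep:
  assumes X: "outer_rep X r s u v" and c: "0 \<le> c"
  shows "opball_dist_sq c X = (\<Sum>k<r. (max (s k - c) 0)\<^sup>2)"
proof (rule antisym)
  define Z\<^sub>0 where "Z\<^sub>0 = (\<Sum>k<r. min (s k) c *\<^sub>R outer (u k) (v k))"
  have "opnorm_le Z\<^sub>0 c"
    unfolding Z\<^sub>0_def using X c by (intro opnorm_le_sum_outer) (auto simp: outer_rep_def)
  moreover have "X - Z\<^sub>0 = (\<Sum>k<r. max (s k - c) 0 *\<^sub>R outer (u k) (v k))"
  proof -
    have "X - Z\<^sub>0 = (\<Sum>k<r. (s k - min (s k) c) *\<^sub>R outer (u k) (v k))"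
      using X by (simp add: outer_rep_def Z\<^sub>0_def sum_subtractf scaleR_diff_left)
    also have "\<dots> = (\<Sum>k<r. max (s k - c) 0 *\<^sub>R outer (u k) (v k))"
      by (rule sum.cong) (auto simp: min_def max_def)
    finally show ?thesis .
  qed
  moreover note norm_sum_orthonormal_upto_sq[OF outer_rep_orthonormal[OF X]]
  ultimately have "(\<Sum>k<r. (max (s k - c) 0)\<^sup>2) \<in> {(norm (X - Z))\<^sup>2 | Z. opnorm_le Z c}"
    by (intro CollectI exI[of _ Z\<^sub>0] conjI) simp_all
  then show "opball_dist_sq c X \<le> (\<Sum>k<r. (max (s k - c) 0)\<^sup>2)"
    unfolding opball_dist_sq_def by (rule cInf_lower) (auto intro: bdd_belowI[of _ 0])
  show "(\<Sum>k<r. (max (s k - c) 0)\<^sup>2) \<le> opball_dist_sq c X"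
    using opball_dist_sq_subgradient[OF X c, of X] by simp
qed

section \<open>The convex envelope and the spectral map\<close>

lemma N_env_svd_rep:
  "\<exists>r s u v. svd_rep X r s u v \<and>
     N_env \<sigma>0 F X = (\<Sum>k<r. \<sigma>0\<^sup>2 - (max (\<sigma>0 - s k) 0)\<^sup>2) + (norm (X - F))\<^sup>2"
proof -
  let ?P = "\<lambda>t. \<exists>r s u v. svd_rep X r s u v \<and> t = (\<Sum>k<r. \<sigma>0\<^sup>2 - (max (\<sigma>0 - s k) 0)\<^sup>2)"
  have "?P (SOME t. ?P t)" by (rule someI_ex) (use svd_rep_exists[of X] in blast)
  then show ?thesis unfolding N_env_def by metis
qed

lemma N_env_eq_nuclear_norm:
  assumes "0 \<le> \<sigma>0"
  shows "N_env \<sigma>0 F X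
    = 2 * \<sigma>0 * nuclear_norm X + opball_dist_sq \<sigma>0 X - (norm X)\<^sup>2 + (norm (X - F))\<^sup>2"
proof -
  obtain r s u v where sv: "svd_rep X r s u v"
    and N: "N_env \<sigma>0 F X = (\<Sum>k<r. \<sigma>0\<^sup>2 - (max (\<sigma>0 - s k) 0)\<^sup>2) + (norm (X - F))\<^sup>2"
    using N_env_svd_rep by blast
  have X: "outer_rep X r s u v" by (rule outer_rep_if_svd_rep[OF sv])
  have "\<sigma>0\<^sup>2 - (max (\<sigma>0 - t) 0)\<^sup>2 = 2 * \<sigma>0 * t + (max (t - \<sigma>0) 0)\<^sup>2 - t\<^sup>2" for t
    by (simp add: max_def power2_eq_square algebra_simps)
  then have "(\<Sum>k<r. \<sigma>0\<^sup>2 - (max (\<sigma>0 - s k) 0)\<^sup>2)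
      = 2 * \<sigma>0 * (\<Sum>k<r. s k) + (\<Sum>k<r. (max (s k - \<sigma>0) 0)\<^sup>2) - (\<Sum>k<r. (s k)\<^sup>2)"
    by (simp add: sum_subtractf sum.distrib sum_distrib_left)
  then show ?thesis
    using N nuclear_norm_outer_rep[OF X] opball_dist_sq_outer_rep[OF X assms] norm_outer_rep_sq[OF X]
    by simp
qed

lemma N_env_le:
  fixes X F :: "real^'n^'m"
  shows "N_env \<sigma>0 F X \<le> real CARD('m) * \<sigma>0\<^sup>2 + (norm (X - F))\<^sup>2"
proof -
  obtain r s u v where sv: "svd_rep X r s u v"
    and N: "N_env \<sigma>0 F X = (\<Sum>k<r. \<sigma>0\<^sup>2 - (max (\<sigma>0 - s k) 0)\<^sup>2) + (norm (X - F))\<^sup>2"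
    using N_env_svd_rep by blast
  have "orthonormal_upto r u" using sv by (simp add: svd_rep_def orthonormal_upto_def)
  then have "real r \<le> real CARD('m)" using orthonormal_upto_le_DIM by fastforce
  have "(\<Sum>k<r. \<sigma>0\<^sup>2 - (max (\<sigma>0 - s k) 0)\<^sup>2) \<le> (\<Sum>k<r. \<sigma>0\<^sup>2)" by (rule sum_mono) simp
  also have "\<dots> \<le> real CARD('m) * \<sigma>0\<^sup>2"
    using \<open>real r \<le> real CARD('m)\<close> by (simp add: mult_right_mono)
  finally show ?thesis using N by simp
qed

lemma spectral_map_svd_rep:
  "\<exists>r s u v. svd_rep G r s u v \<and> spectral_map f G = (\<Sum>k<r. f (s k) *\<^sub>R outer (u k) (v k))"
proof -
  let ?P = "\<lambda>X. \<exists>r s u v. svd_rep G r s u v \<and> X = (\<Sum>k<r. f (s k) *\<^sub>R outer (u k) (v k))"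
  have "?P (SOME X. ?P X)" by (rule someI_ex) (use svd_rep_exists[of G] in blast)
  then show ?thesis unfolding spectral_map_def by metis
qed

text \<open>The scalar optimality condition behind \<open>f_alpha\<close>: with \<open>x = f\<^sub>\<alpha>(s)\<close> one has
  \<open>2s - \<alpha>x = 2\<sigma>\<^sub>0 g + 2(x - \<sigma>\<^sub>0)\<^sub>+\<close> for some \<open>g \<in> [0,1]\<close> with \<open>g = 1\<close> if \<open>x > 0\<close>.\<close>

lemma f_alpha_optimality:
  fixes \<sigma>0 \<alpha> s :: real
  assumes \<sigma>0: "\<sigma>0 > 0" and \<alpha>: "\<alpha> > 0" and s: "s \<ge> 0"
  defines "x \<equiv> f_alpha \<sigma>0 \<alpha> s"
  defines "g \<equiv> 2 * s - \<alpha> * x - 2 * max (x - \<sigma>0) 0"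
  shows "0 \<le> x" and "0 \<le> g" and "g \<le> 2 * \<sigma>0" and "x * g = 2 * \<sigma>0 * x"
proof -
  consider (zero) "s < \<sigma>0" | (linear) "\<sigma>0 \<le> s" "s < (1 + \<alpha>/2) * \<sigma>0"
    | (scaled) "(1 + \<alpha>/2) * \<sigma>0 \<le> s"
    by linarith
  then have "0 \<le> x \<and> 0 \<le> g \<and> g \<le> 2 * \<sigma>0 \<and> x * g = 2 * \<sigma>0 * x"
  proof cases
    case zero
    then show ?thesis using s by (simp add: x_def g_def f_alpha_def)
  next
    case linear
    then have ax: "\<alpha> * x = 2 * (s - \<sigma>0)" using \<alpha> by (simp add: x_def f_alpha_def)
    have "x \<ge> 0" using linear \<alpha> by (simp add: x_def f_alpha_def)
    moreover have "\<alpha> * x < \<alpha> * \<sigma>0" using ax linear by (simp add: algebra_simps)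
    then have "x < \<sigma>0" using \<alpha> by simp
    ultimately show ?thesis using ax \<sigma>0 by (simp add: g_def)
  next
    case scaled
    have pos: "0 < 1 + \<alpha>/2" using \<alpha> by simp
    have "\<sigma>0 \<le> (1 + \<alpha>/2) * \<sigma>0" using \<alpha> \<sigma>0 by (simp add: algebra_simps)
    then have "x = s / (1 + \<alpha>/2)" using scaled by (simp add: x_def f_alpha_def)
    then have sx: "s = (1 + \<alpha>/2) * x" and "\<sigma>0 \<le> x"
      using pos scaled by (simp_all add: pos_le_divide_eq mult.commute)
    then show ?thesis using \<sigma>0 by (simp add: g_def algebra_simps)
  qed
  then show "0 \<le> x" and "0 \<le> g" and "g \<le> 2 * \<sigma>0" and "x * g = 2 * \<sigma>0 * x" by auto
qed

text \<open>\<open>W\<close> and \<open>2e\<close> are subgradients at \<open>X\<close> of \<open>2\<sigma>\<^sub>0 \<parallel>\<cdot>\<parallel>\<^sub>*\<close> and of \<open>dist(\<cdot>, \<sigma>\<^sub>0 B\<^sub>o\<^sub>p)\<^sup>2\<close>;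
  their sum is the gradient of \<open>2\<langle>\<cdot>, G\<rangle> - \<alpha>/2 \<parallel>\<cdot>\<parallel>\<^sup>2\<close> at \<open>X\<close>.\<close>

lemma spectral_f_alpha_subgradients:
  fixes G :: "real^'n^'m"
  assumes \<sigma>0: "\<sigma>0 > 0" and \<alpha>: "\<alpha> > 0"
  defines "X \<equiv> spectral_map (f_alpha \<sigma>0 \<alpha>) G"
  obtains W e where "opnorm_le W (2 * \<sigma>0)" and "X \<bullet> W = 2 * \<sigma>0 * nuclear_norm X"
    and "W + 2 *\<^sub>R e = 2 *\<^sub>R G - \<alpha> *\<^sub>R X"
    and "\<And>Y. opball_dist_sq \<sigma>0 X + 2 * (e \<bullet> (Y - X)) \<le> opball_dist_sq \<sigma>0 Y"
proof -
  obtain r s u v where sv: "svd_rep G r s u v"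
    and X: "X = (\<Sum>k<r. f_alpha \<sigma>0 \<alpha> (s k) *\<^sub>R outer (u k) (v k))"
    using spectral_map_svd_rep[of G "f_alpha \<sigma>0 \<alpha>"] by (auto simp: X_def)
  define x m g where "x k = f_alpha \<sigma>0 \<alpha> (s k)"
    and "m k = max (x k - \<sigma>0) 0" and "g k = 2 * s k - \<alpha> * x k - 2 * m k" for k
  define E where "E k = outer (u k) (v k)" for k
  define W e where "W = (\<Sum>k<r. g k *\<^sub>R E k)" and "e = (\<Sum>k<r. m k *\<^sub>R E k)"
  have G: "outer_rep G r s u v" by (rule outer_rep_if_svd_rep[OF sv])
  then have ou: "orthonormal_upto r u" and ov: "orthonormal_upto r v"
    and Gs: "G = (\<Sum>k<r. s k *\<^sub>R E k)"
    by (simp_all add: outer_rep_def E_def)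
  have oE: "orthonormal_upto r E"
    unfolding E_def[abs_def] by (rule outer_rep_orthonormal[OF G])
  have opt: "0 \<le> x k" "0 \<le> g k" "g k \<le> 2 * \<sigma>0" "x k * g k = 2 * \<sigma>0 * x k" if "k < r" for k
    using f_alpha_optimality[OF \<sigma>0 \<alpha>, of "s k"] G that
    by (simp_all add: outer_rep_def x_def m_def g_def)
  have Xx: "outer_rep X r x u v" using X ou ov opt by (simp add: outer_rep_def x_def)
  show ?thesis
  proof
    show "opnorm_le W (2 * \<sigma>0)"
      unfolding W_def E_def using opt \<sigma>0 by (intro opnorm_le_sum_outer[OF ou ov]) auto
    have "X \<bullet> W = (\<Sum>k<r. x k * g k)"
      unfolding W_def X x_def[symmetric] E_def[symmetric] by (rule inner_sum_orthonormal_upto[OF oE])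
    also have "\<dots> = 2 * \<sigma>0 * (\<Sum>k<r. x k)" by (simp add: opt sum_distrib_left)
    finally show "X \<bullet> W = 2 * \<sigma>0 * nuclear_norm X" by (simp add: nuclear_norm_outer_rep[OF Xx])
    show "W + 2 *\<^sub>R e = 2 *\<^sub>R G - \<alpha> *\<^sub>R X"
      by (simp add: W_def e_def Gs X x_def[symmetric] E_def[symmetric] g_def scaleR_sum_right
          sum.distrib[symmetric] sum_subtractf[symmetric] algebra_simps)
    show "opball_dist_sq \<sigma>0 X + 2 * (e \<bullet> (Y - X)) \<le> opball_dist_sq \<sigma>0 Y" for Y
      using opball_dist_sq_subgradient[OF Xx, of \<sigma>0 Y] opball_dist_sq_outer_rep[OF Xx, of \<sigma>0] \<sigma>0
      by (simp add: e_def m_def E_def)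
  qed
qed

lemma spectral_f_alpha_variational:
  fixes F \<Lambda> Y :: "real^'n^'m"
  assumes \<sigma>0: "\<sigma>0 > 0" and \<alpha>: "\<alpha> > 0"
  defines "X \<equiv> spectral_map (f_alpha \<sigma>0 \<alpha>) (F - (1/2) *\<^sub>R \<Lambda>)"
  shows "(N_env \<sigma>0 F X + \<alpha>/2 * (norm X)\<^sup>2) + \<Lambda> \<bullet> X + \<alpha>/2 * (norm (Y - X))\<^sup>2
         \<le> (N_env \<sigma>0 F Y + \<alpha>/2 * (norm Y)\<^sup>2) + \<Lambda> \<bullet> Y"
proof -
  define G where "G = F - (1/2) *\<^sub>R \<Lambda>"
  obtain W e where W: "opnorm_le W (2 * \<sigma>0)" and XW: "X \<bullet> W = 2 * \<sigma>0 * nuclear_norm X"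
    and We: "W + 2 *\<^sub>R e = 2 *\<^sub>R G - \<alpha> *\<^sub>R X"
    and Q: "opball_dist_sq \<sigma>0 X + 2 * (e \<bullet> (Y - X)) \<le> opball_dist_sq \<sigma>0 Y"
    using spectral_f_alpha_subgradients[OF \<sigma>0 \<alpha>, of G] unfolding X_def G_def by metis
  have YW: "Y \<bullet> W \<le> 2 * \<sigma>0 * nuclear_norm Y" by (rule inner_le_nuclear_norm[OF W])
  have "(Y - X) \<bullet> (W + 2 *\<^sub>R e) = (Y - X) \<bullet> (2 *\<^sub>R G - \<alpha> *\<^sub>R X)" by (simp only: We)
  then have subgrad: "Y \<bullet> W - X \<bullet> W + 2 * (e \<bullet> (Y - X)) = 2 * (Y \<bullet> G) - 2 * (X \<bullet> G) - \<alpha> * ((Y - X) \<bullet> X)"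
    by (simp add: inner_add_right inner_diff_right inner_commute[of "Y - X"] inner_commute[of e] inner_diff_left algebra_simps)
  have lagrangian: "N_env \<sigma>0 F Z + \<alpha>/2 * (norm Z)\<^sup>2 + \<Lambda> \<bullet> Z
      = 2 * \<sigma>0 * nuclear_norm Z + opball_dist_sq \<sigma>0 Z + \<alpha>/2 * (norm Z)\<^sup>2 - 2 * (Z \<bullet> G) + F \<bullet> F"
    for Z
    using N_env_eq_nuclear_norm[of \<sigma>0 F Z] \<sigma>0
    by (simp add: G_def power2_norm_eq_inner inner_diff_left inner_diff_right inner_commute)
  have "(norm Y)\<^sup>2 = (norm X)\<^sup>2 + 2 * ((Y - X) \<bullet> X) + (norm (Y - X))\<^sup>2"
    by (simp add: power2_norm_eq_inner inner_diff_left inner_diff_right inner_commute)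
  then have "\<alpha>/2 * (norm Y)\<^sup>2 = \<alpha>/2 * (norm X)\<^sup>2 + \<alpha> * ((Y - X) \<bullet> X) + \<alpha>/2 * (norm (Y - X))\<^sup>2"
    by (simp only: ring_distribs)
  then show ?thesis
    using lagrangian[of X] lagrangian[of Y] subgrad XW YW Q by linarith
qed

section \<open>Uzawa's method\<close>

lemma LIMSEQ_if_Fejer_monotone_subseq:
  fixes L :: "nat \<Rightarrow> 'a::metric_space"
  assumes fejer: "\<And>n. dist (L (Suc n)) c \<le> dist (L n) c"
    and r: "strict_mono r" and lim: "(L \<circ> r) \<longlonglongrightarrow> c"
  shows "L \<longlonglongrightarrow> c"
proof (rule metric_LIMSEQ_I)
  fix \<epsilon> :: real assume "0 < \<epsilon>"
  then obtain k where "dist (L (r k)) c < \<epsilon>"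
    using lim by (auto simp: o_def dest: metric_LIMSEQ_D)
  then show "\<exists>N. \<forall>n\<ge>N. dist (L n) c < \<epsilon>"
    using lift_Suc_antimono_le[of "\<lambda>n. dist (L n) c", OF fejer] by (meson le_less_trans)
qed

lemma inner_orthogonal_comp: "x \<in> M\<^sup>\<bottom> \<Longrightarrow> m \<in> M \<Longrightarrow> x \<bullet> m = 0"
  by (simp add: orthogonal_comp_def orthogonal_def inner_commute)

lemma norm_orthogonal_comp_component_le:
  fixes x q m :: "'a::real_inner"
  assumes "q \<in> M\<^sup>\<bottom>" and "x - q \<in> M" and "m \<in> M"
  shows "norm q \<le> norm (x - m)"
proof -
  have "q \<bullet> q = q \<bullet> (x - m)"
    using inner_orthogonal_comp[OF assms(1,2)] inner_orthogonal_comp[OF assms(1,3)]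
    by (simp add: inner_diff_right)
  then have "(norm q)\<^sup>2 \<le> norm q * norm (x - m)"
    using Cauchy_Schwarz_ineq2[of q "x - m"] by (simp add: power2_norm_eq_inner)
  then show ?thesis by (cases "norm q = 0") (auto simp: power2_eq_square)
qed

lemma continuous_on_if_linearisation_bounds:
  fixes f :: "'a::real_inner \<Rightarrow> real" and g :: "'a \<Rightarrow> 'a"
  assumes upper: "\<And>x y. f y \<le> f x + (y - x) \<bullet> g x"
    and lower: "\<And>x y. f x + (y - x) \<bullet> g x - (norm (y - x))\<^sup>2 / c \<le> f y" and c: "0 < c"
  shows "continuous_on S f"
proof (intro continuous_at_imp_continuous_on ballI)
  fix x
  have bound: "norm (f y - f x) \<le> norm (y - x) * norm (g x) + (norm (y - x))\<^sup>2 / c" for y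
  proof -
    have cs: "\<bar>(y - x) \<bullet> g x\<bar> \<le> norm (y - x) * norm (g x)" by (rule Cauchy_Schwarz_ineq2)
    have "0 \<le> (norm (y - x))\<^sup>2 / c" using c by simp
    then show ?thesis
      unfolding real_norm_def
      using upper[of y x] lower[of x y] abs_le_D1[OF cs] abs_le_D2[OF cs]
      by (intro abs_leI) linarith+
  qed
  have lim: "((\<lambda>y. norm (y - x) * norm (g x) + (norm (y - x))\<^sup>2 / c) \<longlongrightarrow> 0) (at x)"
  proof -
    have n: "((\<lambda>y. norm (y - x)) \<longlongrightarrow> 0) (at x)"
      by (rule tendsto_norm_zero[OF LIM_zero[OF tendsto_ident_at]])
    have n2: "((\<lambda>y. (norm (y - x))\<^sup>2) \<longlongrightarrow> 0) (at x)"
      using tendsto_power[OF n, of 2] by (simp only: power_zero_numeral)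
    show ?thesis
      using tendsto_add[OF tendsto_mult_left_zero[OF n, of "norm (g x)"] tendsto_divide_zero[OF n2, of c]]
      by (simp only: add_0_right)
  qed
  have "((\<lambda>y. f y - f x) \<longlongrightarrow> 0) (at x)"
    by (rule Lim_null_comparison[OF always_eventually lim]) (use bound in blast)
  then show "isCont f x" by (simp add: isCont_def LIM_zero_iff)
qed

text \<open>\<open>primal \<Lambda>\<close> minimises the \<open>\<alpha>\<close>-strongly convex Lagrangian \<open>\<Phi> Y + \<Lambda> \<bullet> Y\<close>.\<close>

locale uzawa =
  fixes \<Phi> :: "'a::euclidean_space \<Rightarrow> real" and primal :: "'a \<Rightarrow> 'a" and \<alpha> :: real
  assumes alpha_pos: "0 < \<alpha>"
    and primal_variational:
      "\<And>\<Lambda> Y. \<Phi> (primal \<Lambda>) + \<Lambda> \<bullet> primal \<Lambda> + \<alpha>/2 * (norm (Y - primal \<Lambda>))\<^sup>2 \<le> \<Phi> Y + \<Lambda> \<bullet> Y"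
begin

definition dual :: "'a \<Rightarrow> real" where
  "dual \<Lambda> = \<Phi> (primal \<Lambda>) + \<Lambda> \<bullet> primal \<Lambda>"

lemma dual_le: "dual \<Lambda> \<le> \<Phi> Y + \<Lambda> \<bullet> Y"
proof -
  have "0 \<le> \<alpha>/2 * (norm (Y - primal \<Lambda>))\<^sup>2" using alpha_pos by simp
  then show ?thesis using primal_variational[of \<Lambda> Y] unfolding dual_def by linarith
qed

lemma primal_minimises:
  assumes "S \<in> M\<^sup>\<bottom>" and "primal S \<in> M" and "Y \<in> M"
  shows "\<Phi> (primal S) \<le> \<Phi> Y"
  using dual_le[of S Y] inner_orthogonal_comp[OF assms(1)] assms(2,3) by (simp add: dual_def)

lemma primal_monotone:
  "\<alpha> * (norm (primal \<Lambda> - primal \<Lambda>'))\<^sup>2 \<le> (\<Lambda>' - \<Lambda>) \<bullet> (primal \<Lambda> - primal \<Lambda>')"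
proof -
  have "norm (primal \<Lambda>' - primal \<Lambda>) = norm (primal \<Lambda> - primal \<Lambda>')"
    by (rule norm_minus_commute)
  then show ?thesis
    using primal_variational[of \<Lambda> "primal \<Lambda>'"] primal_variational[of \<Lambda>' "primal \<Lambda>"]
    by (simp add: inner_diff_left inner_diff_right algebra_simps)
qed

lemma primal_lipschitz: "norm (primal \<Lambda> - primal \<Lambda>') \<le> norm (\<Lambda> - \<Lambda>') / \<alpha>"
proof -
  have "\<alpha> * (norm (primal \<Lambda> - primal \<Lambda>'))\<^sup>2 \<le> norm (\<Lambda> - \<Lambda>') * norm (primal \<Lambda> - primal \<Lambda>')"
    using primal_monotone[of \<Lambda> \<Lambda>'] Cauchy_Schwarz_ineq2[of "\<Lambda>' - \<Lambda>" "primal \<Lambda> - primal \<Lambda>'"]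
    by (simp add: norm_minus_commute)
  then have "\<alpha> * norm (primal \<Lambda> - primal \<Lambda>') \<le> norm (\<Lambda> - \<Lambda>')"
    by (cases "norm (primal \<Lambda> - primal \<Lambda>') = 0") (auto simp: power2_eq_square)
  then show ?thesis using alpha_pos by (simp add: field_simps)
qed

lemma continuous_on_primal: "continuous_on S primal"
proof (rule lipschitz_on_continuous_on)
  show "(1/\<alpha>)-lipschitz_on S primal"
    using primal_lipschitz alpha_pos by (intro lipschitz_onI) (simp_all add: dist_norm)
qed

lemma dual_le_linearisation: "dual \<Lambda>' \<le> dual \<Lambda> + (\<Lambda>' - \<Lambda>) \<bullet> primal \<Lambda>"
  using dual_le[of \<Lambda>' "primal \<Lambda>"] by (simp add: dual_def inner_diff_left)

lemma dual_ge_linearisation: "dual \<Lambda> + (\<Lambda>' - \<Lambda>) \<bullet> primal \<Lambda> - (norm (\<Lambda>' - \<Lambda>))\<^sup>2 / \<alpha> \<le> dual \<Lambda>'"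
proof -
  have "- ((\<Lambda>' - \<Lambda>) \<bullet> (primal \<Lambda>' - primal \<Lambda>)) \<le> norm (\<Lambda>' - \<Lambda>) * norm (primal \<Lambda>' - primal \<Lambda>)"
    using Cauchy_Schwarz_ineq2[of "\<Lambda>' - \<Lambda>" "primal \<Lambda>' - primal \<Lambda>"] by linarith
  also have "\<dots> \<le> norm (\<Lambda>' - \<Lambda>) * (norm (\<Lambda>' - \<Lambda>) / \<alpha>)"
    by (rule mult_left_mono[OF primal_lipschitz]) simp
  finally have "- ((\<Lambda>' - \<Lambda>) \<bullet> (primal \<Lambda>' - primal \<Lambda>)) \<le> (norm (\<Lambda>' - \<Lambda>))\<^sup>2 / \<alpha>"
    by (simp add: power2_eq_square)
  then show ?thesis
    using dual_le[of \<Lambda> "primal \<Lambda>'"] by (simp add: dual_def inner_diff_left inner_diff_right)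
qed

lemma continuous_on_dual: "continuous_on S dual"
  using dual_le_linearisation dual_ge_linearisation alpha_pos
  by (rule continuous_on_if_linearisation_bounds)

lemma dual_coercive:
  assumes growth: "\<And>Y. \<Phi> Y \<le> A + B * (norm Y)\<^sup>2" and B: "0 < B"
  shows "dual \<Lambda> \<le> A - (norm \<Lambda>)\<^sup>2 / (4 * B)"
proof -
  define c where "c = 1 / (2 * B)"
  have "dual \<Lambda> \<le> \<Phi> (- c *\<^sub>R \<Lambda>) + \<Lambda> \<bullet> (- c *\<^sub>R \<Lambda>)" by (rule dual_le)
  also have "\<dots> \<le> A + B * (c * norm \<Lambda>)\<^sup>2 - c * (norm \<Lambda>)\<^sup>2"
    using growth[of "- c *\<^sub>R \<Lambda>"] B by (simp add: c_def power2_norm_eq_inner[symmetric] abs_mult)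
  also have "\<dots> = A - (norm \<Lambda>)\<^sup>2 / (4 * B)"
    using B by (simp add: c_def field_simps power2_eq_square)
  finally show ?thesis .
qed

lemma dual_attains_max:
  assumes growth: "\<And>Y. \<Phi> Y \<le> A + B * (norm Y)\<^sup>2" and B: "0 < B"
    and S: "closed S" and \<Lambda>\<^sub>0: "\<Lambda>\<^sub>0 \<in> S"
  obtains \<Lambda> where "\<Lambda> \<in> S" and "\<And>\<Lambda>'. \<Lambda>' \<in> S \<Longrightarrow> dual \<Lambda>' \<le> dual \<Lambda>"
proof -
  define K where "K = S \<inter> {\<Lambda>. dual \<Lambda>\<^sub>0 \<le> dual \<Lambda>}"
  have "closed K"
    unfolding K_def by (intro closed_Int S closed_Collect_le continuous_on_const continuous_on_dual)
  moreover have "norm \<Lambda> \<le> sqrt (4 * B * \<bar>A - dual \<Lambda>\<^sub>0\<bar>)" if "\<Lambda> \<in> K" for \<Lambda>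
  proof -
    have "(norm \<Lambda>)\<^sup>2 / (4 * B) \<le> \<bar>A - dual \<Lambda>\<^sub>0\<bar>"
      using dual_coercive[OF growth B, of \<Lambda>] that abs_ge_self[of "A - dual \<Lambda>\<^sub>0"]
      by (simp add: K_def)
    then show ?thesis using B by (simp add: real_le_rsqrt field_simps)
  qed
  then have "bounded K" by (auto simp: bounded_iff)
  ultimately have "compact K" by (simp add: compact_eq_bounded_closed)
  moreover have "\<Lambda>\<^sub>0 \<in> K" using \<Lambda>\<^sub>0 by (simp add: K_def)
  ultimately obtain \<Lambda> where \<Lambda>: "\<Lambda> \<in> K" and max: "\<And>\<Lambda>'. \<Lambda>' \<in> K \<Longrightarrow> dual \<Lambda>' \<le> dual \<Lambda>"
    using continuous_attains_sup[of K dual] continuous_on_dual by blast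
  show ?thesis
  proof
    show "\<Lambda> \<in> S" using \<Lambda> by (simp add: K_def)
    show "dual \<Lambda>' \<le> dual \<Lambda>" if "\<Lambda>' \<in> S" for \<Lambda>'
      proof (cases "\<Lambda>' \<in> K")
      case False
      then show ?thesis using \<Lambda> that by (auto simp: K_def)
    qed (rule max)
  qed
qed

end

locale uzawa_iteration = uzawa +
  fixes M :: "'a set" and P :: "'a \<Rightarrow> 'a" and X L :: "nat \<Rightarrow> 'a"
  assumes subspace_M: "subspace M"
    and P_orthogonal: "\<And>x. P x \<in> M\<^sup>\<bottom>" and P_residual: "\<And>x. x - P x \<in> M"
    and L_0: "L 0 = 0"
    and X_Suc: "\<And>n. X (Suc n) = primal (L n)"
    and L_Suc: "\<And>n. L (Suc n) = L n + \<alpha> *\<^sub>R P (X (Suc n))"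
begin

lemma L_in_orthogonal_comp: "L n \<in> M\<^sup>\<bottom>"
  by (induction n)
    (simp_all add: L_0 L_Suc subspace_orthogonal_comp subspace_0 subspace_add subspace_mul P_orthogonal)

text \<open>A maximiser \<open>S\<close> of \<open>dual\<close> on \<open>M\<^sup>\<bottom>\<close> is a saddle point: moving \<open>S\<close> in the
  direction of the supergradient component \<open>P (primal S)\<close> would increase \<open>dual\<close>.\<close>

lemma saddle_point_exists:
  assumes growth: "\<And>Y. \<Phi> Y \<le> A + B * (norm Y)\<^sup>2" and B: "0 < B"
  obtains S where "S \<in> M\<^sup>\<bottom>" and "primal S \<in> M"
proof -
  obtain S where S: "S \<in> M\<^sup>\<bottom>" and max: "\<And>\<Lambda>. \<Lambda> \<in> M\<^sup>\<bottom> \<Longrightarrow> dual \<Lambda> \<le> dual S"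
    using dual_attains_max[OF growth B closed_subspace[OF subspace_orthogonal_comp], of 0]
      subspace_0[OF subspace_orthogonal_comp] by blast
  define p where "p = P (primal S)"
  have pp: "p \<bullet> primal S = p \<bullet> p"
    using inner_orthogonal_comp[OF P_orthogonal P_residual] by (simp add: p_def inner_diff_right)
  have "S + (\<alpha>/2) *\<^sub>R p \<in> M\<^sup>\<bottom>"
    using S P_orthogonal by (simp add: p_def subspace_add subspace_mul subspace_orthogonal_comp)
  then have "dual (S + (\<alpha>/2) *\<^sub>R p) \<le> dual S" by (rule max)
  moreover have "dual S + (\<alpha>/2) * (p \<bullet> p) - (\<alpha>/2)\<^sup>2 * (p \<bullet> p) / \<alpha> \<le> dual (S + (\<alpha>/2) *\<^sub>R p)"
  proof -
    have "(norm ((\<alpha>/2) *\<^sub>R p))\<^sup>2 = (\<alpha>/2)\<^sup>2 * (p \<bullet> p)"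
      by (simp add: power_mult_distrib power2_norm_eq_inner[symmetric] power_divide)
    then show ?thesis using dual_ge_linearisation[of S "S + (\<alpha>/2) *\<^sub>R p"] pp by simp
  qed
  ultimately have "\<alpha>/4 * (p \<bullet> p) \<le> 0"
    using alpha_pos by (simp add: power2_eq_square field_simps)
  then have "p \<bullet> p = 0" using alpha_pos inner_ge_zero[of p] by (simp add: mult_le_0_iff)
  then have "p = 0" by simp
  then have "primal S \<in> M" using P_residual[of "primal S"] by (simp add: p_def)
  with S that show ?thesis by blast
qed

lemma Fejer_monotone:
  assumes S: "S \<in> M\<^sup>\<bottom>" and SM: "primal S \<in> M"
  shows "(norm (L (Suc n) - S))\<^sup>2 + \<alpha>\<^sup>2 * (norm (X (Suc n) - primal S))\<^sup>2 \<le> (norm (L n - S))\<^sup>2"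
proof -
  define D q where "D = X (Suc n) - primal S" and "q = P (X (Suc n))"
  have LS: "L n - S \<in> M\<^sup>\<bottom>"
    using L_in_orthogonal_comp S by (simp add: subspace_diff subspace_orthogonal_comp)
  have "(L n - S) \<bullet> q = (L n - S) \<bullet> D"
    using inner_orthogonal_comp[OF LS P_residual[of "X (Suc n)"]] inner_orthogonal_comp[OF LS SM]
    by (simp add: D_def q_def inner_diff_right)
  also have "\<dots> \<le> - \<alpha> * (norm D)\<^sup>2"
    using primal_monotone[of "L n" S] by (simp add: D_def X_Suc inner_diff_left inner_diff_right)
  finally have cross: "(L n - S) \<bullet> q \<le> - \<alpha> * (norm D)\<^sup>2" .
  have "norm q \<le> norm D"
    unfolding q_def D_def by (rule norm_orthogonal_comp_component_le[OF P_orthogonal P_residual SM])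
  then have "\<alpha>\<^sup>2 * (norm q)\<^sup>2 \<le> \<alpha>\<^sup>2 * (norm D)\<^sup>2" by (simp add: power_mono mult_left_mono)
  moreover have "(norm (L (Suc n) - S))\<^sup>2
      = (norm (L n - S))\<^sup>2 + 2 * \<alpha> * ((L n - S) \<bullet> q) + \<alpha>\<^sup>2 * (norm q)\<^sup>2"
    unfolding L_Suc q_def[symmetric] power2_norm_eq_inner
    by (simp add: inner_add_left inner_add_right inner_diff_left inner_diff_right inner_commute
        power2_eq_square algebra_simps)
  moreover have "2 * \<alpha> * ((L n - S) \<bullet> q) \<le> - 2 * \<alpha>\<^sup>2 * (norm D)\<^sup>2"
    using mult_left_mono[OF cross, of "2 * \<alpha>"] alpha_pos by (simp add: power2_eq_square)
  ultimately show ?thesis by (simp add: D_def)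
qed

lemma primal_iterates_tendsto:
  assumes S: "S \<in> M\<^sup>\<bottom>" and SM: "primal S \<in> M"
  shows "X \<longlonglongrightarrow> primal S"
proof -
  define e where "e n = (norm (L n - S))\<^sup>2" for n
  have step: "(norm (X (Suc n) - primal S))\<^sup>2 \<le> (e n - e (Suc n)) / \<alpha>\<^sup>2" for n
    using Fejer_monotone[OF S SM, of n] alpha_pos by (simp add: e_def field_simps)
  have "decseq e"
  proof (rule decseq_SucI)
    have "0 \<le> (e n - e (Suc n)) / \<alpha>\<^sup>2" for n by (rule order_trans[OF zero_le_power2 step])
    then show "e (Suc n) \<le> e n" for n using alpha_pos by (simp add: zero_le_divide_iff)
  qed
  then obtain l where el: "e \<longlonglongrightarrow> l"
    using decseq_convergent[of e 0] by (auto simp: e_def)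
  have "(\<lambda>n. e n - e (Suc n)) \<longlonglongrightarrow> l - l" by (rule tendsto_diff[OF el LIMSEQ_Suc[OF el]])
  then have "(\<lambda>n. (e n - e (Suc n)) / \<alpha>\<^sup>2) \<longlonglongrightarrow> 0" by (simp add: tendsto_divide_zero)
  then have "(\<lambda>n. (norm (X (Suc n) - primal S))\<^sup>2) \<longlonglongrightarrow> 0"
    by (rule Lim_null_comparison[OF always_eventually, rotated]) (use step in simp)
  then have "(\<lambda>n. sqrt ((norm (X (Suc n) - primal S))\<^sup>2)) \<longlonglongrightarrow> sqrt 0"
    by (rule tendsto_real_sqrt)
  then have "(\<lambda>n. X (Suc n) - primal S) \<longlonglongrightarrow> 0"
    by (simp only: real_sqrt_abs abs_norm_cancel real_sqrt_zero tendsto_norm_zero_iff)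
  then show ?thesis by (simp only: LIM_zero_iff filterlim_sequentially_Suc)
qed

lemma multipliers_tendsto_saddle_point:
  assumes S: "S \<in> M\<^sup>\<bottom>" and SM: "primal S \<in> M"
  obtains S' where "L \<longlonglongrightarrow> S'" and "S' \<in> M\<^sup>\<bottom>" and "primal S' \<in> M"
proof -
  have dist_decr: "dist (L (Suc n)) S' \<le> dist (L n) S'"
    if "S' \<in> M\<^sup>\<bottom>" "primal S' \<in> M" for n S'
  proof (rule power2_le_imp_le)
    have "0 \<le> \<alpha>\<^sup>2 * (norm (X (Suc n) - primal S'))\<^sup>2" by simp
    then show "(dist (L (Suc n)) S')\<^sup>2 \<le> (dist (L n) S')\<^sup>2"
      using Fejer_monotone[OF that, of n] unfolding dist_norm by linarith
  qed simp
  have "dist S (L n) \<le> dist S (L 0)" for n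
    using lift_Suc_antimono_le[of "\<lambda>n. dist (L n) S", OF dist_decr[OF S SM]]
    by (simp add: dist_commute)
  then have "bounded (range L)" unfolding bounded_def by blast
  then obtain S' r where r: "strict_mono r" and Lr: "(L \<circ> r) \<longlonglongrightarrow> S'"
    using bounded_imp_convergent_subsequence by blast
  have S': "S' \<in> M\<^sup>\<bottom>"
    using closed_sequentially[OF closed_subspace[OF subspace_orthogonal_comp] _ Lr]
      L_in_orthogonal_comp by simp
  have "((\<lambda>n. X (Suc n)) \<circ> r) \<longlonglongrightarrow> primal S"
    using LIMSEQ_subseq_LIMSEQ[OF LIMSEQ_Suc[OF primal_iterates_tendsto[OF S SM]] r] .
  moreover have "((\<lambda>n. X (Suc n)) \<circ> r) \<longlonglongrightarrow> primal S'"
    using continuous_on_tendsto_compose[OF continuous_on_primal[of UNIV] Lr] by (simp add: o_def X_Suc)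
  ultimately have "primal S = primal S'" by (rule LIMSEQ_unique)
  then have S'M: "primal S' \<in> M" using SM by simp
  have "L \<longlonglongrightarrow> S'"
    by (rule LIMSEQ_if_Fejer_monotone_subseq[OF dist_decr[OF S' S'M] r Lr])
  with S' S'M that show ?thesis by blast
qed

theorem uzawa_convergent:
  assumes growth: "\<And>Y. \<Phi> Y \<le> A + B * (norm Y)\<^sup>2" and B: "0 < B"
  shows "\<exists>Xs Ls. X \<longlonglongrightarrow> Xs \<and> L \<longlonglongrightarrow> Ls \<and> Xs \<in> M \<and> (\<forall>Y\<in>M. \<Phi> Xs \<le> \<Phi> Y)"
proof -
  obtain S where S: "S \<in> M\<^sup>\<bottom>" and SM: "primal S \<in> M"
    by (rule saddle_point_exists[OF growth B])
  obtain S' where "L \<longlonglongrightarrow> S'" by (rule multipliers_tendsto_saddle_point[OF S SM])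
  then show ?thesis
    using primal_iterates_tendsto[OF S SM] SM primal_minimises[OF S SM] by blast
qed

end

lemma proj_perp_props:
  fixes M :: "(real^'n^'m) set"
  assumes M: "subspace M"
  shows "proj_perp M x \<in> M\<^sup>\<bottom>" and "x - proj_perp M x \<in> M"
proof -
  let ?Y = "THE Y. Y \<in> M \<and> (\<forall>Z\<in>M. (x - Y) \<bullet> Z = 0)"
  have "\<exists>!Y. Y \<in> M \<and> (\<forall>Z\<in>M. (x - Y) \<bullet> Z = 0)"
  proof -
    obtain y z where "y \<in> span M" and "\<And>w. w \<in> span M \<Longrightarrow> orthogonal z w" and "x = y + z"
      using orthogonal_subspace_decomp_exists[of M x] by blast
    moreover have "span M = M" using M by (simp add: span_eq_iff)
    ultimately have y: "y \<in> M \<and> (\<forall>Z\<in>M. (x - y) \<bullet> Z = 0)"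
      by (auto simp: orthogonal_def)
    moreover have "Y = y" if Y: "Y \<in> M \<and> (\<forall>Z\<in>M. (x - Y) \<bullet> Z = 0)" for Y
    proof -
      have "Y - y \<in> M" using Y y M by (simp add: subspace_diff)
      then have "(Y - y) \<bullet> (Y - y) = 0"
        using Y y by (simp add: inner_diff_left[of x] inner_diff_left[of "Y - y"] algebra_simps)
      then show ?thesis by simp
    qed
    ultimately show ?thesis by blast
  qed
  then have "?Y \<in> M \<and> (\<forall>Z\<in>M. (x - ?Y) \<bullet> Z = 0)" by (rule theI')
  then show "proj_perp M x \<in> M\<^sup>\<bottom>" and "x - proj_perp M x \<in> M"
    by (auto simp: proj_perp_def orthogonal_comp_def orthogonal_def inner_commute)
qed

theorem theorem7:
  fixes F :: "real^'n^'m" and Msub :: "(real^'n^'m) set"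
    and \<sigma>0 \<alpha> :: real
    and X \<Lambda> :: "nat \<Rightarrow> real^'n^'m"
  assumes "subspace Msub"
    and "\<sigma>0 > 0" and "\<alpha> > 0"
    and "\<Lambda> 0 = 0"
    and "\<And>n. X (Suc n) = spectral_map (f_alpha \<sigma>0 \<alpha>) (F - (1/2) *\<^sub>R \<Lambda> n)"
    and "\<And>n. \<Lambda> (Suc n) = \<Lambda> n + \<alpha> *\<^sub>R proj_perp Msub (X (Suc n))"
  shows "\<exists>Xs \<Lambda>s. X \<longlonglongrightarrow> Xs \<and> \<Lambda> \<longlonglongrightarrow> \<Lambda>s \<and> Xs \<in> Msub \<and>
           (\<forall>Y\<in>Msub. N_env \<sigma>0 F Xs + \<alpha>/2 * (norm Xs)\<^sup>2 \<le> N_env \<sigma>0 F Y + \<alpha>/2 * (norm Y)\<^sup>2)"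
proof -
  interpret uzawa_iteration "\<lambda>Y. N_env \<sigma>0 F Y + \<alpha>/2 * (norm Y)\<^sup>2"
      "\<lambda>\<Lambda>. spectral_map (f_alpha \<sigma>0 \<alpha>) (F - (1/2) *\<^sub>R \<Lambda>)" \<alpha> Msub "proj_perp Msub" X \<Lambda>
    using assms spectral_f_alpha_variational proj_perp_props by unfold_locales auto
  have "N_env \<sigma>0 F Y + \<alpha>/2 * (norm Y)\<^sup>2
      \<le> (real CARD('m) * \<sigma>0\<^sup>2 + 2 * (norm F)\<^sup>2) + (2 + \<alpha>/2) * (norm Y)\<^sup>2" for Y
  proof -
    have "(norm (Y - F))\<^sup>2 \<le> (norm Y + norm F)\<^sup>2"
      using norm_triangle_ineq4[of Y F] by (intro power_mono) auto
    also have "\<dots> \<le> 2 * (norm Y)\<^sup>2 + 2 * (norm F)\<^sup>2"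
      using zero_le_power2[of "norm Y - norm F"] by (simp add: power2_sum power2_diff)
    finally show ?thesis using N_env_le[of \<sigma>0 F Y] by (simp add: algebra_simps)
  qed
  moreover have "0 < 2 + \<alpha>/2" using assms by simp
  ultimately show ?thesis by (rule uzawa_convergent)
qed

end
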